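(* Let $f$ be a CR holomorphic function (i.e. $Z_{\overline\alpha}f=0$ for all $\alpha$) defined near $0\in\mathbb{H}^n$. Then for every $m$ the weight $m$ part of $f$ is \[ f_{(m)}=\sum_{\|\mathcal{I}\|=m}\frac{1}{|\mathcal{I}|!}\,z^{\mathcal{I}}\,Z_{\mathcal{I}}f(0), \] the sum being over all ordered lists $\mathcal{I}=I_1\dots I_k$ of indices in $\{0,1,\dots,n\}$ of weight $m$.
   Context: $\mathbb{H}^n=\mathbb{C}^n\times\mathbb{R}$ with coordinates $(z^\alpha,t)$, $\alpha=1,\dots,n$, $z_\alpha=\overline{z^\alpha}$, $|z|^2=z^\alpha z_\alpha$, and CR structure spanned by $Z_\alpha=\partial/\partial z^\alpha+\frac i2 z_\alpha\partial_t$; $Z_{\overline\alpha}=\overline{Z_\alpha}$. Set $Z_0=-i\partial_t$ and $z^0=-|z|^2/2+it$. Dilations $\delta_s(z,t)=(sz,s^2t)$, $s>0$, have generator $X=z^\alpha\partial_\alpha+z^{\overline\alpha}\partial_{\overline\alpha}+2t\partial_t$; a function $\varphi$ is decomposed formally as $\varphi\sim\sum_m\varphi_{(m)}$ with $X\varphi_{(m)}=m\varphi_{(m)}$ ($\varphi_{(m)}$ is the weight $m$ part). For a list $\mathcal{I}=I_1\dots I_k$ of indices in $\{0,\dots,n\}$: $|\mathcal{I}|=k$, $\|\mathcal{I}\|=\sum\|I_j\|$ with $\|\alpha\|=1$, $\|0\|=2$, $z^{\mathcal{I}}=z^{I_1}\cdots z^{I_k}$, $Z_{\mathcal{I}}=Z_{I_1}\cdots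 Z_{I_k}$. *)

theory Defs
  imports "HOL-Analysis.Analysis"
begin

text \<open>Points of the Heisenberg group H^n = C^n x R; the complex coordinates
  z^alpha are indexed by a finite type 'n (so n = CARD('n)).  The index 0 of the
  paper is represented by None, the index alpha by Some alpha.\<close>

type_synonym 'n heis = "(complex ^ 'n) \<times> real"

definition dirD :: "('a::real_normed_vector \<Rightarrow> complex) \<Rightarrow> 'a \<Rightarrow> 'a \<Rightarrow> complex" where
  "dirD f v p = vector_derivative (\<lambda>s::real. f (p + s *\<^sub>R v)) (at 0)"

fun Diter :: "'a::real_normed_vector list \<Rightarrow> ('a \<Rightarrow> complex) \<Rightarrow> 'a \<Rightarrow> complex" where
  "Diter [] f = f"
| "Diter (v # vs) f = dirD (Diter vs f) v"

definition Cinf_on :: "'a::real_normed_vector set \<Rightarrow> ('a \<Rightarrow> complex) \<Rightarrow> bool" where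
  "Cinf_on U f \<longleftrightarrow> (\<forall>vs. Diter vs f differentiable_on U)"

definition dx :: "'n \<Rightarrow> ('n::finite heis \<Rightarrow> complex) \<Rightarrow> 'n heis \<Rightarrow> complex" where
  "dx a f p = dirD f (axis a 1, 0) p"
definition dy :: "'n \<Rightarrow> ('n::finite heis \<Rightarrow> complex) \<Rightarrow> 'n heis \<Rightarrow> complex" where
  "dy a f p = dirD f (axis a \<i>, 0) p"
definition dt :: "('n::finite heis \<Rightarrow> complex) \<Rightarrow> 'n heis \<Rightarrow> complex" where
  "dt f p = dirD f (0, 1) p"

text \<open>Z_alpha = d/dz^alpha + (i/2) z_alpha d/dt,  Z_{bar alpha} = conjugate,  Z_0 = -i d/dt.\<close>
definition heis_Z :: "'n \<Rightarrow> ('n::finite heis \<Rightarrow> complex) \<Rightarrow> 'n heis \<Rightarrow> complex" where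
  "heis_Z a f p = (dx a f p - \<i> * dy a f p) / 2 + (\<i> / 2) * cnj (fst p $ a) * dt f p"
definition heis_Zbar :: "'n \<Rightarrow> ('n::finite heis \<Rightarrow> complex) \<Rightarrow> 'n heis \<Rightarrow> complex" where
  "heis_Zbar a f p = (dx a f p + \<i> * dy a f p) / 2 - (\<i> / 2) * (fst p $ a) * dt f p"
definition heis_Z0 :: "('n::finite heis \<Rightarrow> complex) \<Rightarrow> 'n heis \<Rightarrow> complex" where
  "heis_Z0 f p = - \<i> * dt f p"

fun Zidx :: "'n option \<Rightarrow> ('n::finite heis \<Rightarrow> complex) \<Rightarrow> 'n heis \<Rightarrow> complex" where
  "Zidx None f = heis_Z0 f"
| "Zidx (Some a) f = heis_Z a f"

definition ZI :: "'n option list \<Rightarrow> ('n::finite heis \<Rightarrow> complex) \<Rightarrow> 'n heis \<Rightarrow> complex" where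
  "ZI I f = foldr Zidx I f"

fun zcoord :: "'n option \<Rightarrow> 'n::finite heis \<Rightarrow> complex" where
  "zcoord None p = - complex_of_real ((\<Sum>a\<in>UNIV. (cmod (fst p $ a))\<^sup>2) / 2) + \<i> * complex_of_real (snd p)"
| "zcoord (Some a) p = fst p $ a"

definition zI :: "'n option list \<Rightarrow> 'n::finite heis \<Rightarrow> complex" where
  "zI I p = prod_list (map (\<lambda>i. zcoord i p) I)"

fun idx_wt :: "'n option \<Rightarrow> nat" where
  "idx_wt None = 2"
| "idx_wt (Some a) = 1"

definition list_wt :: "'n option list \<Rightarrow> nat" where
  "list_wt I = sum_list (map idx_wt I)"

definition dil :: "real \<Rightarrow> 'n::finite heis \<Rightarrow> 'n heis" where
  "dil s p = (s *\<^sub>R fst p, s\<^sup>2 * snd p)"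

fun sderiv :: "nat \<Rightarrow> (real \<Rightarrow> complex) \<Rightarrow> real \<Rightarrow> complex" where
  "sderiv 0 g = g"
| "sderiv (Suc k) g = (\<lambda>s. vector_derivative (sderiv k g) (at s))"

text \<open>Weight m part: the coefficient of s^m in the Taylor expansion of
  s \<mapsto> f(delta_s p) at s = 0, i.e. the weighted-homogeneous degree m part of the
  Taylor series of f at 0.\<close>
definition weight_part :: "nat \<Rightarrow> ('n::finite heis \<Rightarrow> complex) \<Rightarrow> 'n heis \<Rightarrow> complex" where
  "weight_part m f p = sderiv m (\<lambda>s. f (dil s p)) 0 / of_nat (fact m)"

end

theory Submission
  imports Defs
begin

(* Differentiating s |-> h (dil s p) applies the Euler field of the dilations,
   sum_a (x^a d/dx^a + y^a d/dy^a) + 2 t d/dt. For a CR function h the identity Zbar_a h = 0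
   turns this along the curve into sum_a z^a Zr_a h + 2 s z^0 Z_0 h, where
   Zr_a = d/dz^a - (i/2) conj(z^a) d/dt is the right-invariant counterpart of Z_a: the coordinate
   z^0 = -|z|^2/2 + i t absorbs exactly the leftover d/dt terms. Since Zr_a and Z_0 commute with
   every Z_b and Zbar_b (by symmetry of second derivatives, all commutators of these first-order
   operators are explicit multiples of d/dt), Zr_a h and Z_0 h are again CR, and
   Z_I Zr_a h (0) = Z_(a I) h (0) because Zr_a = Z_a at the origin. This gives a recursion for
   the m-th s-derivative at 0, and strong induction on m yields m! times the stated sum. The
   combinatorial step is m * sum_(|I|=m) W_I / |I|! = sum_i |i| * sum_(|J|=m-|i|) W_(iJ) / |J|!
   for W invariant under moving a letter, which applies because the Z_i commute. *)

section \<open>Directional derivatives and smoothness\<close>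

lemma has_vector_derivative_frechet_compose:
  fixes h :: "'a::real_normed_vector \<Rightarrow> 'b::real_normed_vector"
  assumes "(\<gamma> has_vector_derivative v) (at s)" and "h differentiable (at (\<gamma> s))"
  shows "((\<lambda>s. h (\<gamma> s)) has_vector_derivative frechet_derivative h (at (\<gamma> s)) v) (at s)"
  using vector_derivative_diff_chain_within[of \<gamma> v s UNIV h] assms
  by (simp add: o_def frechet_derivative_works has_derivative_at_withinI)

lemma has_vector_derivative_line: "((\<lambda>s. p + s *\<^sub>R v) has_vector_derivative v) (at s)"
  by (auto simp: has_vector_derivative_def intro!: derivative_eq_intros)

lemma dirD_eq_frechet_derivative:
  assumes "h differentiable (at p)"
  shows "dirD h v p = frechet_derivative h (at p) v"
proof -
  have "((\<lambda>s. h (p + s *\<^sub>R v)) has_vector_derivative frechet_derivative h (at p) v) (at 0)"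
    using has_vector_derivative_frechet_compose[OF has_vector_derivative_line, of h p 0 v] assms
    by simp
  then show ?thesis
    unfolding dirD_def by (rule vector_derivative_at)
qed

lemma has_vector_derivative_dirD:
  assumes "h differentiable (at (p + s *\<^sub>R v))"
  shows "((\<lambda>s. h (p + s *\<^sub>R v)) has_vector_derivative dirD h v (p + s *\<^sub>R v)) (at s)"
  using has_vector_derivative_frechet_compose[OF has_vector_derivative_line assms]
  unfolding dirD_eq_frechet_derivative[OF assms] .

lemma dirD_cong:
  assumes "open U" and "\<And>x. x \<in> U \<Longrightarrow> h x = k x" and "p \<in> U"
  shows "dirD h v p = dirD k v p"
proof -
  have "open ((\<lambda>s::real. p + s *\<^sub>R v) -` U)"
    by (rule continuous_open_vimage[OF assms(1)]) (intro continuous_intros)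
  then have "\<forall>\<^sub>F s in nhds 0. p + s *\<^sub>R v \<in> U"
    using assms(3) unfolding eventually_nhds by (intro exI[of _ "(\<lambda>s. p + s *\<^sub>R v) -` U"]) auto
  then have "\<forall>\<^sub>F s in nhds 0. s \<in> UNIV \<longrightarrow> h (p + s *\<^sub>R v) = k (p + s *\<^sub>R v)"
    by eventually_elim (use assms(2) in auto)
  then show ?thesis
    unfolding dirD_def by (intro vector_derivative_cong_eq) auto
qed

lemma dirD_const: "dirD (\<lambda>x. c) v p = 0"
  unfolding dirD_def by simp

lemma dirD_add:
  assumes "h differentiable (at p)" and "k differentiable (at p)"
  shows "dirD (\<lambda>x. h x + k x) v p = dirD h v p + dirD k v p"
  using has_vector_derivative_add[OF has_vector_derivative_dirD[of h p 0] has_vector_derivative_dirD[of k p 0]]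
    assms unfolding dirD_def by (simp add: vector_derivative_at)

lemma dirD_mult:
  assumes "h differentiable (at p)" and "k differentiable (at p)"
  shows "dirD (\<lambda>x. h x * k x) v p = dirD h v p * k p + h p * dirD k v p"
  using has_vector_derivative_mult[OF has_vector_derivative_dirD[of h p 0] has_vector_derivative_dirD[of k p 0]]
    assms unfolding dirD_def by (simp add: vector_derivative_at add.commute)

lemma dirD_cmult:
  assumes "h differentiable (at p)"
  shows "dirD (\<lambda>x. c * h x) v p = c * dirD h v p"
  using dirD_mult[of "\<lambda>x. c" p h v] assms by (simp add: dirD_const)

lemma Diter_append: "Diter ws (Diter vs h) = Diter (ws @ vs) h"
  by (induction ws) auto

lemma Diter_const: "Diter (v # vs) (\<lambda>x. c) = (\<lambda>x. 0)"
  by (induction vs arbitrary: v) (auto simp: dirD_const)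

lemma Cinf_on_Diter: "Cinf_on U h \<Longrightarrow> Cinf_on U (Diter vs h)"
  unfolding Cinf_on_def by (simp add: Diter_append)

lemma Cinf_on_dirD: "Cinf_on U h \<Longrightarrow> Cinf_on U (dirD h v)"
  using Cinf_on_Diter[of U h "[v]"] by simp

lemma Cinf_on_imp_differentiable_on: "Cinf_on U h \<Longrightarrow> h differentiable_on U"
  unfolding Cinf_on_def by (drule spec[of _ "[]"]) simp

lemma Cinf_on_imp_differentiable_at:
  "open U \<Longrightarrow> Cinf_on U h \<Longrightarrow> p \<in> U \<Longrightarrow> h differentiable (at p)"
  using Cinf_on_imp_differentiable_on differentiable_on_eq_differentiable_at by blast

lemma differentiable_on_congI:
  assumes "f differentiable_on S" and "\<And>x. x \<in> S \<Longrightarrow> f x = g x"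
  shows "g differentiable_on S"
proof -
  have "g differentiable (at x within S)" if "x \<in> S" for x
    using that assms by (intro differentiable_transform_within[of f x S 1 g]) (auto simp: differentiable_on_def)
  then show ?thesis unfolding differentiable_on_def by blast
qed

lemma Cinf_on_const: "Cinf_on U (\<lambda>x. c)"
  unfolding Cinf_on_def
proof
  fix vs
  show "Diter vs (\<lambda>x. c) differentiable_on U"
    by (cases vs) (simp_all only: Diter.simps(1) Diter_const differentiable_on_const)
qed

lemma Diter_lincomb:
  assumes "open U" and "Cinf_on U h" and "Cinf_on U k" and "p \<in> U"
  shows "Diter vs (\<lambda>x. a * h x + b * k x) p = a * Diter vs h p + b * Diter vs k p"
  using assms(4)
proof (induction vs arbitrary: p)
  case (Cons v vs)
  have "Diter (v # vs) (\<lambda>x. a * h x + b * k x) p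
      = dirD (\<lambda>x. a * Diter vs h x + b * Diter vs k x) v p"
    using dirD_cong[OF assms(1) Cons.IH Cons.prems] by simp
  also have "\<dots> = a * Diter (v # vs) h p + b * Diter (v # vs) k p"
    using Cinf_on_imp_differentiable_at[OF assms(1) Cinf_on_Diter Cons.prems] assms(2,3)
    by (simp add: dirD_add dirD_cmult)
  finally show ?case .
qed simp

lemma Cinf_on_lincomb:
  assumes "open U" and "Cinf_on U h" and "Cinf_on U k"
  shows "Cinf_on U (\<lambda>x. a * h x + b * k x)"
  unfolding Cinf_on_def
proof
  fix vs
  have "(\<lambda>x. a * Diter vs h x + b * Diter vs k x) differentiable_on U"
    using assms(2,3) unfolding Cinf_on_def by (intro derivative_intros) auto
  then show "Diter vs (\<lambda>x. a * h x + b * k x) differentiable_on U"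
    by (rule differentiable_on_congI) (use Diter_lincomb[OF assms] in auto)
qed

lemma Cinf_on_add: "open U \<Longrightarrow> Cinf_on U h \<Longrightarrow> Cinf_on U k \<Longrightarrow> Cinf_on U (\<lambda>x. h x + k x)"
  using Cinf_on_lincomb[of U h k 1 1] by simp

lemma affine_differentiable: "bounded_linear L \<Longrightarrow> (\<lambda>x. c + L x) differentiable (at p)"
  using bounded_linear_imp_differentiable by (intro derivative_intros) auto

lemma dirD_affine: "bounded_linear L \<Longrightarrow> dirD (\<lambda>x. c + L x) v p = L v"
proof -
  assume L: "bounded_linear L"
  have "((\<lambda>x. c + L x) has_derivative L) (at p)"
    using bounded_linear_imp_has_derivative[OF L] by (auto intro!: derivative_eq_intros)
  then show ?thesis
    using dirD_eq_frechet_derivative[OF affine_differentiable[OF L]] frechet_derivative_at by metis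
qed

lemma Diter_mult_affine:
  assumes "open U" and "Cinf_on U h" and L: "bounded_linear L"
  shows "\<exists>R. Cinf_on U R \<and>
    (\<forall>p\<in>U. Diter vs (\<lambda>x. (c + L x) * h x) p = (c + L p) * Diter vs h p + R p)"
proof (induction vs)
  case Nil
  show ?case
    using Cinf_on_const by fastforce
next
  case (Cons v vs)
  then obtain R where R: "Cinf_on U R"
    and eq: "\<And>p. p \<in> U \<Longrightarrow> Diter vs (\<lambda>x. (c + L x) * h x) p = (c + L p) * Diter vs h p + R p"
    by blast
  have "Diter (v # vs) (\<lambda>x. (c + L x) * h x) p
      = (c + L p) * Diter (v # vs) h p + (L v * Diter vs h p + dirD R v p)" if p: "p \<in> U" for p
  proof -
    have dh: "Diter vs h differentiable (at p)" and dR: "R differentiable (at p)"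
      using Cinf_on_imp_differentiable_at[OF assms(1) _ p] Cinf_on_Diter[OF assms(2)] R by auto
    have "Diter (v # vs) (\<lambda>x. (c + L x) * h x) p = dirD (\<lambda>x. (c + L x) * Diter vs h x + R x) v p"
      using dirD_cong[OF assms(1) eq p] by simp
    also have "\<dots> = dirD (\<lambda>x. (c + L x) * Diter vs h x) v p + dirD R v p"
      using dh dR affine_differentiable[OF L] by (simp add: dirD_add differentiable_mult)
    also have "\<dots> = (c + L p) * Diter (v # vs) h p + (L v * Diter vs h p + dirD R v p)"
      using dirD_mult[OF affine_differentiable[OF L] dh] by (simp add: dirD_affine[OF L] algebra_simps)
    finally show ?thesis .
  qed
  moreover have "Cinf_on U (\<lambda>x. L v * Diter vs h x + dirD R v x)"
    using Cinf_on_lincomb[OF assms(1) Cinf_on_Diter[OF assms(2)] Cinf_on_dirD[OF R], of "L v" vs 1 v]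
    by simp
  ultimately show ?case
    by fastforce
qed

lemma Cinf_on_mult_affine:
  assumes "open U" and "Cinf_on U h" and L: "bounded_linear L"
  shows "Cinf_on U (\<lambda>x. (c + L x) * h x)"
  unfolding Cinf_on_def
proof
  fix vs
  obtain R where R: "Cinf_on U R"
    and eq: "\<forall>p\<in>U. Diter vs (\<lambda>x. (c + L x) * h x) p = (c + L p) * Diter vs h p + R p"
    using Diter_mult_affine[OF assms] by blast
  have aff: "(\<lambda>x. c + L x) differentiable_on U"
    using affine_differentiable[OF L] by (simp add: differentiable_at_imp_differentiable_on)
  then have "(\<lambda>x. (c + L x) * Diter vs h x + R x) differentiable_on U"
    using assms(2) Cinf_on_imp_differentiable_on[OF R] unfolding Cinf_on_def
    by (intro differentiable_on_add differentiable_on_mult[OF aff]) auto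
  then show "Diter vs (\<lambda>x. (c + L x) * h x) differentiable_on U"
    by (rule differentiable_on_congI) (use eq in auto)
qed

section \<open>Symmetry of second directional derivatives\<close>

lemma vector_differentiable_bound_const_linearization:
  fixes f :: "real \<Rightarrow> 'b::real_normed_vector"
  assumes "0 \<le> r"
    and f': "\<And>t. t \<in> {0..r} \<Longrightarrow> (f has_vector_derivative f' t) (at t within {0..r})"
    and B: "\<And>t. t \<in> {0..r} \<Longrightarrow> norm (f' t - c) \<le> B"
  shows "norm (f r - f 0 - r *\<^sub>R c) \<le> r * B"
proof -
  have "norm ((f r - r *\<^sub>R c) - (f 0 - 0 *\<^sub>R c)) \<le> B * norm (r - 0)"
  proof (rule differentiable_bound[where f' = "\<lambda>t s. s *\<^sub>R (f' t - c)"])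
    show "((\<lambda>t. f t - t *\<^sub>R c) has_derivative (\<lambda>s. s *\<^sub>R (f' t - c))) (at t within {0..r})"
      if "t \<in> {0..r}" for t
      using f'[OF that] unfolding has_vector_derivative_def
      by (auto intro!: derivative_eq_intros simp: scaleR_diff_right)
    show "onorm (\<lambda>s. s *\<^sub>R (f' t - c)) \<le> B" if "t \<in> {0..r}" for t
      using B[OF that] by (intro onorm_le) (simp add: mult.commute[of B] mult_left_mono)
  qed (use assms(1) in auto)
  then show ?thesis
    using assms(1) by (simp add: algebra_simps)
qed

lemma second_difference_bound:
  fixes h :: "'a::real_normed_vector \<Rightarrow> complex"
  assumes U: "open U" and h: "Cinf_on U h" and "0 \<le> r"
    and near: "\<And>a b. a \<in> {0..r} \<Longrightarrow> b \<in> {0..r} \<Longrightarrow>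
      p + a *\<^sub>R u + b *\<^sub>R w \<in> U \<and> norm (dirD (dirD h u) w (p + a *\<^sub>R u + b *\<^sub>R w) - H) \<le> e"
  shows "norm (h (p + r *\<^sub>R u + r *\<^sub>R w) - h (p + r *\<^sub>R u) - h (p + r *\<^sub>R w) + h p - r\<^sup>2 *\<^sub>R H)
    \<le> e * r\<^sup>2"
proof -
  define q where "q a b = p + a *\<^sub>R u + b *\<^sub>R w" for a b
  have hu: "Cinf_on U (dirD h u)"
    using Cinf_on_dirD[OF h] .
  have inner: "norm (dirD h u (q a r) - dirD h u (q a 0) - r *\<^sub>R H) \<le> r * e"
    if a: "a \<in> {0..r}" for a
  proof -
    have "((\<lambda>b. dirD h u (p + a *\<^sub>R u + b *\<^sub>R w)) has_vector_derivative dirD (dirD h u) w (q a b))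
            (at b within {0..r})" if b: "b \<in> {0..r}" for b
      using has_vector_derivative_dirD[of "dirD h u" "p + a *\<^sub>R u" b w]
        Cinf_on_imp_differentiable_at[OF U hu] near[OF a b]
      by (auto simp: q_def intro: has_vector_derivative_at_within)
    from vector_differentiable_bound_const_linearization[OF \<open>0 \<le> r\<close> this]
    show ?thesis
      using near[OF a] by (simp add: q_def)
  qed
  have "((\<lambda>a. h (p + r *\<^sub>R w + a *\<^sub>R u) - h (p + a *\<^sub>R u)) has_vector_derivative
          dirD h u (q a r) - dirD h u (q a 0)) (at a within {0..r})" if a: "a \<in> {0..r}" for a
  proof -
    have qr: "q a r = p + r *\<^sub>R w + a *\<^sub>R u" and q0: "q a 0 = p + a *\<^sub>R u"
      by (simp_all add: q_def algebra_simps)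
    have "h differentiable (at (q a r))" and "h differentiable (at (q a 0))"
      using near[OF a, of 0] near[OF a, of r] \<open>0 \<le> r\<close> Cinf_on_imp_differentiable_at[OF U h]
      by (auto simp: q_def)
    then have "((\<lambda>a. h (p + r *\<^sub>R w + a *\<^sub>R u)) has_vector_derivative dirD h u (q a r)) (at a)"
      and "((\<lambda>a. h (p + a *\<^sub>R u)) has_vector_derivative dirD h u (q a 0)) (at a)"
      unfolding qr q0 by (auto intro: has_vector_derivative_dirD)
    then show ?thesis
      by (intro has_vector_derivative_at_within[OF has_vector_derivative_diff])
  qed
  from vector_differentiable_bound_const_linearization[OF \<open>0 \<le> r\<close> this inner]
  have "norm (h (p + r *\<^sub>R w + r *\<^sub>R u) - h (p + r *\<^sub>R u) - h (p + r *\<^sub>R w) + h p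
          - r *\<^sub>R r *\<^sub>R H) \<le> r * (r * e)"
    by (simp add: algebra_simps)
  then show ?thesis
    by (simp add: power2_eq_square algebra_simps)
qed

lemma second_difference_estimate:
  fixes h :: "'a::real_normed_vector \<Rightarrow> complex"
  assumes U: "open U" and h: "Cinf_on U h" and p: "p \<in> U" and e: "e > 0"
  shows "\<forall>\<^sub>F r in at_right 0.
    norm (h (p + r *\<^sub>R u + r *\<^sub>R w) - h (p + r *\<^sub>R u) - h (p + r *\<^sub>R w) + h p
          - r\<^sup>2 *\<^sub>R dirD (dirD h u) w p) \<le> e * r\<^sup>2"
proof -
  define H where "H = dirD (dirD h u) w"
  have "isCont H p"
    unfolding H_def using Cinf_on_imp_differentiable_at[OF U Cinf_on_dirD[OF Cinf_on_dirD[OF h]] p]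
    by (rule differentiable_imp_continuous_within)
  then obtain \<rho>1 where "\<rho>1 > 0" and \<rho>1: "\<And>x. dist x p < \<rho>1 \<Longrightarrow> dist (H x) (H p) < e"
    using e unfolding continuous_at_eps_delta by blast
  obtain \<rho>2 where "\<rho>2 > 0" and \<rho>2: "ball p \<rho>2 \<subseteq> U"
    using openE[OF U p] by blast
  define \<rho> where "\<rho> = min \<rho>1 \<rho>2"
  have "\<rho> > 0"
    using \<open>\<rho>1 > 0\<close> \<open>\<rho>2 > 0\<close> by (simp add: \<rho>_def)
  then have "\<forall>\<^sub>F r in at_right 0. r \<in> {0<..<\<rho> / (norm u + norm w + 1)}"
    using norm_ge_zero[of u] norm_ge_zero[of w]
    by (intro eventually_at_right_real divide_pos_pos) linarith+
  then show ?thesis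
  proof eventually_elim
    case (elim r)
    then have r: "0 < r" "r * (norm u + norm w + 1) < \<rho>"
      using norm_ge_zero[of u] norm_ge_zero[of w] by (auto simp: pos_less_divide_eq)
    show ?case
      unfolding H_def[symmetric]
    proof (rule second_difference_bound[OF U h less_imp_le[OF r(1)]])
      fix a b assume "a \<in> {0..r}" "b \<in> {0..r}"
      then have "norm (a *\<^sub>R u + b *\<^sub>R w) \<le> r * norm u + r * norm w"
        by (intro norm_triangle_le add_mono) (auto intro: mult_right_mono)
      also have "\<dots> < \<rho>"
        using r by (simp add: algebra_simps)
      finally have "dist (p + a *\<^sub>R u + b *\<^sub>R w) p < \<rho>"
        by (simp add: dist_norm add.assoc)
      then have "p + a *\<^sub>R u + b *\<^sub>R w \<in> U"
        using \<rho>2 by (auto simp: \<rho>_def dist_commute)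
      moreover have "norm (H (p + a *\<^sub>R u + b *\<^sub>R w) - H p) < e"
        using \<rho>1 \<open>dist (p + a *\<^sub>R u + b *\<^sub>R w) p < \<rho>\<close> by (simp add: \<rho>_def dist_norm)
      ultimately show "p + a *\<^sub>R u + b *\<^sub>R w \<in> U
          \<and> norm (dirD (dirD h u) w (p + a *\<^sub>R u + b *\<^sub>R w) - H p) \<le> e"
        by (simp add: H_def)
    qed
  qed
qed

lemma dirD_dirD_commute:
  fixes h :: "'a::real_normed_vector \<Rightarrow> complex"
  assumes "open U" and "Cinf_on U h" and "p \<in> U"
  shows "dirD (dirD h u) w p = dirD (dirD h w) u p"
proof -
  define \<Delta> where "\<Delta> r = h (p + r *\<^sub>R u + r *\<^sub>R w) - h (p + r *\<^sub>R u) - h (p + r *\<^sub>R w) + h p"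
    for r :: real
  have \<Delta>_sym: "\<Delta> r = h (p + r *\<^sub>R w + r *\<^sub>R u) - h (p + r *\<^sub>R w) - h (p + r *\<^sub>R u) + h p" for r
    by (simp add: \<Delta>_def algebra_simps)
  have "norm (dirD (dirD h u) w p - dirD (dirD h w) u p) \<le> 0 + e" if "e > 0" for e
  proof -
    have "\<forall>\<^sub>F r in at_right 0. 0 < r \<and>
        norm (\<Delta> r - r\<^sup>2 *\<^sub>R dirD (dirD h u) w p) \<le> e / 2 * r\<^sup>2 \<and>
        norm (\<Delta> r - r\<^sup>2 *\<^sub>R dirD (dirD h w) u p) \<le> e / 2 * r\<^sup>2"
      using eventually_at_right_less[of 0]
        second_difference_estimate[OF assms half_gt_zero[OF that], of u w]
        second_difference_estimate[OF assms half_gt_zero[OF that], of w u]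
      unfolding \<Delta>_def[symmetric] \<Delta>_sym[symmetric]
      by eventually_elim auto
    then obtain r where r: "0 < r"
      and "norm (\<Delta> r - r\<^sup>2 *\<^sub>R dirD (dirD h u) w p) \<le> e / 2 * r\<^sup>2"
      and "norm (\<Delta> r - r\<^sup>2 *\<^sub>R dirD (dirD h w) u p) \<le> e / 2 * r\<^sup>2"
      using eventually_happens'[OF trivial_limit_at_right_real] by blast
    then have "norm (r\<^sup>2 *\<^sub>R (dirD (dirD h u) w p - dirD (dirD h w) u p)) \<le> e * r\<^sup>2"
      using norm_triangle_le_diff[of "\<Delta> r - r\<^sup>2 *\<^sub>R dirD (dirD h w) u p"
          "\<Delta> r - r\<^sup>2 *\<^sub>R dirD (dirD h u) w p"]
      by (simp add: scaleR_diff_right)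
    then show ?thesis
      using r by (simp add: mult.commute[of e])
  qed
  then show ?thesis
    using field_le_epsilon[of "norm (dirD (dirD h u) w p - dirD (dirD h w) u p)" 0] by simp
qed

section \<open>First-order operators on the Heisenberg group\<close>

(* Z_a, Zbar_a, Z_0 and the right-invariant Zr_a are all of this form, and the commutator of two
   such operators is a constant multiple of d/dt. *)
definition heis_field ::
    "complex \<Rightarrow> 'n heis \<Rightarrow> complex \<Rightarrow> 'n heis \<Rightarrow> complex \<Rightarrow> (complex ^ 'n \<Rightarrow> complex)
      \<Rightarrow> ('n::finite heis \<Rightarrow> complex) \<Rightarrow> 'n heis \<Rightarrow> complex" where
  "heis_field k1 v1 k2 v2 c L h p =
     k1 * dirD h v1 p + k2 * dirD h v2 p + (c + L (fst p)) * dirD h (0, 1) p"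

lemma Cinf_on_heis_field:
  assumes "open U" and "Cinf_on U h" and "bounded_linear L"
  shows "Cinf_on U (heis_field k1 v1 k2 v2 c L h)"
proof -
  have "bounded_linear (\<lambda>p::'a heis. L (fst p))"
    using bounded_linear_compose[OF assms(3) bounded_linear_fst] by (simp add: o_def)
  then show ?thesis
    unfolding heis_field_def[abs_def]
    by (intro Cinf_on_add Cinf_on_lincomb Cinf_on_mult_affine Cinf_on_dirD assms(1,2))
qed

lemma heis_field_cong:
  assumes "open U" and "\<And>x. x \<in> U \<Longrightarrow> h x = k x" and "p \<in> U"
  shows "heis_field k1 v1 k2 v2 c L h p = heis_field k1 v1 k2 v2 c L k p"
  unfolding heis_field_def using dirD_cong[OF assms] by simp

lemma heis_field_vanishing:
  assumes "open U" and "\<And>x. x \<in> U \<Longrightarrow> h x = 0" and "p \<in> U"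
  shows "heis_field k1 v1 k2 v2 c L h p = 0"
  using heis_field_cong[OF assms] by (simp add: heis_field_def dirD_const)

lemma dirD_heis_field:
  assumes "open U" and h: "Cinf_on U h" and "p \<in> U" and L: "bounded_linear L"
  shows "dirD (heis_field k1 v1 k2 v2 c L h) w p
     = k1 * dirD (dirD h v1) w p + k2 * dirD (dirD h v2) w p
       + L (fst w) * dirD h (0, 1) p + (c + L (fst p)) * dirD (dirD h (0, 1)) w p"
proof -
  have d: "dirD h v differentiable (at p)" for v
    using Cinf_on_imp_differentiable_at[OF assms(1) Cinf_on_dirD[OF h] assms(3)] .
  have L': "bounded_linear (\<lambda>x::'a heis. L (fst x))"
    using bounded_linear_compose[OF L bounded_linear_fst] by (simp add: o_def)
  note dL = affine_differentiable[OF L', of c p]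
  have "dirD (heis_field k1 v1 k2 v2 c L h) w p
      = dirD (\<lambda>x. k1 * dirD h v1 x + k2 * dirD h v2 x) w p
        + dirD (\<lambda>x. (c + L (fst x)) * dirD h (0, 1) x) w p"
    unfolding heis_field_def[abs_def] using d
    by (intro dirD_add differentiable_add differentiable_mult[OF dL] differentiable_mult
        differentiable_const)
  also have "dirD (\<lambda>x. k1 * dirD h v1 x + k2 * dirD h v2 x) w p
      = k1 * dirD (dirD h v1) w p + k2 * dirD (dirD h v2) w p"
    using d by (simp add: dirD_add dirD_cmult differentiable_mult)
  also have "dirD (\<lambda>x. (c + L (fst x)) * dirD h (0, 1) x) w p
      = L (fst w) * dirD h (0, 1) p + (c + L (fst p)) * dirD (dirD h (0, 1)) w p"
    using dirD_mult[OF dL d] dirD_affine[OF L'] by simp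
  finally show ?thesis
    by (simp add: algebra_simps)
qed

lemma heis_field_commutator:
  assumes U: "open U" and h: "Cinf_on U h" and p: "p \<in> U"
    and L: "bounded_linear L" and M: "bounded_linear M"
  shows "heis_field k1 v1 k2 v2 c L (heis_field m1 u1 m2 u2 d M h) p
       - heis_field m1 u1 m2 u2 d M (heis_field k1 v1 k2 v2 c L h) p
     = (k1 * M (fst v1) + k2 * M (fst v2) - m1 * L (fst u1) - m2 * L (fst u2)) * dirD h (0, 1) p"
proof -
  have sym: "dirD (dirD h a) b p = dirD (dirD h b) a p" for a b
    using dirD_dirD_commute[OF U h p] .
  have "L 0 = 0" "M 0 = 0"
    using L M by (simp_all add: linear_simps)
  then show ?thesis
    unfolding heis_field_def[of k1 v1 k2 v2 c L _ p] heis_field_def[of m1 u1 m2 u2 d M _ p]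
    unfolding dirD_heis_field[OF U h p L] dirD_heis_field[OF U h p M] fst_conv
    using sym[of v1 u1] sym[of v2 u1] sym[of v1 u2] sym[of v2 u2] sym[of "(0, 1)" u1]
      sym[of "(0, 1)" u2] sym[of "(0, 1)" v1] sym[of "(0, 1)" v2]
    by (simp add: algebra_simps)
qed

lemma heis_field_commute:
  assumes "open U" and "Cinf_on U h" and "p \<in> U" and "bounded_linear L" and "bounded_linear M"
    and "k1 * M (fst v1) + k2 * M (fst v2) = m1 * L (fst u1) + m2 * L (fst u2)"
  shows "heis_field k1 v1 k2 v2 c L (heis_field m1 u1 m2 u2 d M h) p
       = heis_field m1 u1 m2 u2 d M (heis_field k1 v1 k2 v2 c L h) p"
  using heis_field_commutator[OF assms(1-5), of k1 v1 k2 v2 c m1 u1 m2 u2 d] assms(6)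
  by (simp add: algebra_simps)

lemma bounded_linear_mult_cnj_nth: "bounded_linear (\<lambda>z::complex ^ 'n::finite. c * cnj (z $ a))"
  by (intro bounded_linear_const_mult bounded_linear_compose[OF bounded_linear_cnj] bounded_linear_vec_nth)

lemma bounded_linear_mult_nth: "bounded_linear (\<lambda>z::complex ^ 'n::finite. c * z $ a)"
  by (intro bounded_linear_const_mult bounded_linear_vec_nth)

lemma heis_Z_eq_heis_field:
  "heis_Z a = heis_field (1/2) (axis a 1, 0) (- \<i>/2) (axis a \<i>, 0) 0 (\<lambda>z. \<i>/2 * cnj (z $ a))"
  by (intro ext) (simp add: heis_Z_def heis_field_def dx_def dy_def dt_def field_simps)

lemma heis_Zbar_eq_heis_field:
  "heis_Zbar a = heis_field (1/2) (axis a 1, 0) (\<i>/2) (axis a \<i>, 0) 0 (\<lambda>z. - \<i>/2 * z $ a)"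
  by (intro ext) (simp add: heis_Zbar_def heis_field_def dx_def dy_def dt_def field_simps)

lemma heis_Z0_eq_heis_field: "heis_Z0 = heis_field 0 0 0 0 (- \<i>) (\<lambda>z. 0)"
  by (intro ext) (simp add: heis_Z0_def heis_field_def dt_def)

(* Right-invariant counterpart of Z_a. *)
definition heis_Zr :: "'n \<Rightarrow> ('n::finite heis \<Rightarrow> complex) \<Rightarrow> 'n heis \<Rightarrow> complex" where
  "heis_Zr a f p = (dx a f p - \<i> * dy a f p) / 2 - (\<i> / 2) * cnj (fst p $ a) * dt f p"

lemma heis_Zr_eq_heis_field:
  "heis_Zr a = heis_field (1/2) (axis a 1, 0) (- \<i>/2) (axis a \<i>, 0) 0 (\<lambda>z. - \<i>/2 * cnj (z $ a))"
  by (intro ext) (simp add: heis_Zr_def heis_field_def dx_def dy_def dt_def field_simps)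

lemma heis_Zr_at_0: "heis_Zr a h 0 = heis_Z a h 0"
  by (simp add: heis_Zr_def heis_Z_def)

lemma Zidx_eq_heis_field:
  "\<exists>k1 v1 k2 v2 c L. bounded_linear L \<and> Zidx i = heis_field k1 v1 k2 v2 c L"
proof (cases i)
  case None
  then have "Zidx i = heis_field 0 0 0 0 (- \<i>) (\<lambda>z. 0)"
    using heis_Z0_eq_heis_field by (simp add: fun_eq_iff)
  then show ?thesis
    using bounded_linear_zero by blast
next
  case (Some a)
  then have "Zidx i = heis_field (1/2) (axis a 1, 0) (- \<i>/2) (axis a \<i>, 0) 0 (\<lambda>z. \<i>/2 * cnj (z $ a))"
    using heis_Z_eq_heis_field by (simp add: fun_eq_iff)
  then show ?thesis
    using bounded_linear_mult_cnj_nth by blast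
qed

lemma Cinf_on_Zidx: "open U \<Longrightarrow> Cinf_on U h \<Longrightarrow> Cinf_on U (Zidx i h)"
  using Zidx_eq_heis_field[of i] by (auto intro: Cinf_on_heis_field)

lemma Zidx_cong:
  assumes "open U" and "\<And>x. x \<in> U \<Longrightarrow> h x = k x" and "p \<in> U"
  shows "Zidx i h p = Zidx i k p"
proof -
  obtain k1 v1 k2 v2 c L where "Zidx i = heis_field k1 v1 k2 v2 c L"
    using Zidx_eq_heis_field by blast
  then show ?thesis
    using heis_field_cong[OF assms] by simp
qed

lemma Cinf_on_heis_Zr: "open U \<Longrightarrow> Cinf_on U h \<Longrightarrow> Cinf_on U (heis_Zr a h)"
  unfolding heis_Zr_eq_heis_field by (intro Cinf_on_heis_field bounded_linear_mult_cnj_nth)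

lemma heis_Zr_cong:
  "open U \<Longrightarrow> (\<And>x. x \<in> U \<Longrightarrow> h x = k x) \<Longrightarrow> p \<in> U \<Longrightarrow> heis_Zr a h p = heis_Zr a k p"
  unfolding heis_Zr_eq_heis_field by (rule heis_field_cong)

lemma heis_Z_commute:
  assumes "open U" and "Cinf_on U h" and "p \<in> U"
  shows "heis_Z a (heis_Z b h) p = heis_Z b (heis_Z a h) p"
  unfolding heis_Z_eq_heis_field
  by (rule heis_field_commute[OF assms bounded_linear_mult_cnj_nth bounded_linear_mult_cnj_nth])
    (simp add: axis_def)

lemma heis_Z_heis_Z0_commute:
  assumes "open U" and "Cinf_on U h" and "p \<in> U"
  shows "heis_Z a (heis_Z0 h) p = heis_Z0 (heis_Z a h) p"
  unfolding heis_Z_eq_heis_field heis_Z0_eq_heis_field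
  by (rule heis_field_commute[OF assms bounded_linear_mult_cnj_nth bounded_linear_zero]) simp

lemma Zidx_commute:
  assumes "open U" and "Cinf_on U h" and "p \<in> U"
  shows "Zidx i (Zidx j h) p = Zidx j (Zidx i h) p"
  using heis_Z_commute[OF assms] heis_Z_heis_Z0_commute[OF assms] by (cases i; cases j) auto

lemma heis_Zr_Zidx_commute:
  assumes "open U" and "Cinf_on U h" and "p \<in> U"
  shows "heis_Zr a (Zidx j h) p = Zidx j (heis_Zr a h) p"
proof (cases j)
  case None
  show ?thesis
    unfolding None Zidx.simps heis_Zr_eq_heis_field heis_Z0_eq_heis_field
    by (rule heis_field_commute[OF assms bounded_linear_mult_cnj_nth bounded_linear_zero]) simp
next
  case (Some b)
  show ?thesis
    unfolding Some Zidx.simps heis_Zr_eq_heis_field heis_Z_eq_heis_field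
    by (rule heis_field_commute[OF assms bounded_linear_mult_cnj_nth bounded_linear_mult_cnj_nth])
      (simp add: axis_def)
qed

lemma heis_Zbar_heis_Zr_commute:
  assumes "open U" and "Cinf_on U h" and "p \<in> U"
  shows "heis_Zbar b (heis_Zr a h) p = heis_Zr a (heis_Zbar b h) p"
  unfolding heis_Zr_eq_heis_field heis_Zbar_eq_heis_field
  by (rule heis_field_commute[OF assms bounded_linear_mult_nth bounded_linear_mult_cnj_nth])
    (simp add: axis_def)

lemma heis_Zbar_heis_Z0_commute:
  assumes "open U" and "Cinf_on U h" and "p \<in> U"
  shows "heis_Zbar b (heis_Z0 h) p = heis_Z0 (heis_Zbar b h) p"
  unfolding heis_Z0_eq_heis_field heis_Zbar_eq_heis_field
  by (rule heis_field_commute[OF assms bounded_linear_mult_nth bounded_linear_zero]) simp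

lemma ZI_Nil [simp]: "ZI [] h = h"
  by (simp add: ZI_def)

lemma ZI_Cons [simp]: "ZI (i # I) h = Zidx i (ZI I h)"
  by (simp add: ZI_def)

lemma ZI_append: "ZI (I @ J) h = ZI I (ZI J h)"
  by (simp add: ZI_def)

lemma Cinf_on_ZI: "open U \<Longrightarrow> Cinf_on U h \<Longrightarrow> Cinf_on U (ZI I h)"
  by (induction I) (auto intro: Cinf_on_Zidx)

lemma ZI_commute:
  assumes U: "open U" and h: "Cinf_on U h" and p: "p \<in> U"
    and Op_Cinf: "\<And>k. Cinf_on U k \<Longrightarrow> Cinf_on U (Op k)"
    and Op_cong: "\<And>k k' q. (\<And>x. x \<in> U \<Longrightarrow> k x = k' x) \<Longrightarrow> q \<in> U \<Longrightarrow> Op k q = Op k' q"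
    and Op_commute: "\<And>k j q. Cinf_on U k \<Longrightarrow> q \<in> U \<Longrightarrow> Zidx j (Op k) q = Op (Zidx j k) q"
  shows "ZI I (Op h) p = Op (ZI I h) p"
  using p
proof (induction I arbitrary: p)
  case (Cons j I)
  have "ZI (j # I) (Op h) p = Zidx j (\<lambda>x. Op (ZI I h) x) p"
    using Zidx_cong[OF U Cons.IH Cons.prems] by simp
  also have "\<dots> = Op (ZI (j # I) h) p"
    using Op_commute[OF Cinf_on_ZI[OF U h] Cons.prems] by simp
  finally show ?case .
qed simp

lemma ZI_move_to_front:
  assumes "open U" and "Cinf_on U h" and "p \<in> U"
  shows "ZI (I @ i # J) h p = ZI (i # I @ J) h p"
proof -
  have "ZI I (Zidx i (ZI J h)) p = Zidx i (ZI I (ZI J h)) p"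
    using assms(1,3) Cinf_on_ZI[OF assms(1,2)]
    by (intro ZI_commute) (auto intro: Cinf_on_Zidx Zidx_cong Zidx_commute)
  then show ?thesis
    by (simp add: ZI_append)
qed

lemma zI_move_to_front: "zI (I @ i # J) p = zI (i # I @ J) p"
  by (simp add: zI_def ac_simps)

lemma ZI_heis_Zr_at_0:
  assumes "open U" and "0 \<in> U" and "Cinf_on U h"
  shows "ZI I (heis_Zr a h) 0 = ZI (Some a # I) h 0"
proof -
  have "ZI I (heis_Zr a h) 0 = heis_Zr a (ZI I h) 0"
    using assms by (intro ZI_commute)
      (auto intro: Cinf_on_heis_Zr heis_Zr_cong heis_Zr_Zidx_commute[symmetric])
  then show ?thesis
    by (simp add: heis_Zr_at_0)
qed

lemma ZI_heis_Z0_at_0: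
  assumes "open U" and "0 \<in> U" and "Cinf_on U h"
  shows "ZI I (heis_Z0 h) 0 = ZI (None # I) h 0"
  using ZI_move_to_front[OF assms(1,3,2), of I None "[]"] by (simp add: ZI_append)

definition CR_on :: "'n::finite heis set \<Rightarrow> ('n heis \<Rightarrow> complex) \<Rightarrow> bool" where
  "CR_on U h \<longleftrightarrow> (\<forall>a. \<forall>q\<in>U. heis_Zbar a h q = 0)"

lemma CR_on_heis_Zr:
  assumes "open U" and "Cinf_on U h" and "CR_on U h"
  shows "CR_on U (heis_Zr a h)"
  unfolding CR_on_def
proof (intro allI ballI)
  fix b q assume q: "q \<in> U"
  have "heis_Zbar b (heis_Zr a h) q = heis_Zr a (heis_Zbar b h) q"
    using heis_Zbar_heis_Zr_commute[OF assms(1,2) q] .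
  also have "\<dots> = 0"
    using assms(3) q unfolding CR_on_def heis_Zr_eq_heis_field
    by (intro heis_field_vanishing[OF assms(1)]) auto
  finally show "heis_Zbar b (heis_Zr a h) q = 0" .
qed

lemma CR_on_heis_Z0:
  assumes "open U" and "Cinf_on U h" and "CR_on U h"
  shows "CR_on U (heis_Z0 h)"
  unfolding CR_on_def
proof (intro allI ballI)
  fix b q assume q: "q \<in> U"
  have "heis_Zbar b (heis_Z0 h) q = heis_Z0 (heis_Zbar b h) q"
    using heis_Zbar_heis_Z0_commute[OF assms(1,2) q] .
  also have "\<dots> = 0"
    using assms(3) q unfolding CR_on_def heis_Z0_eq_heis_field
    by (intro heis_field_vanishing[OF assms(1)]) auto
  finally show "heis_Zbar b (heis_Z0 h) q = 0" .
qed

section \<open>Derivatives along dilations\<close>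

lemma has_vector_derivative_dil:
  "((\<lambda>s. dil s p) has_vector_derivative (fst p, 2 * s * snd p)) (at s)"
proof -
  have "((\<lambda>s. s *\<^sub>R fst p) has_vector_derivative fst p) (at s)"
    by (auto simp: has_vector_derivative_def intro!: derivative_eq_intros)
  moreover have "((\<lambda>s. s\<^sup>2 * snd p) has_vector_derivative 2 * s * snd p) (at s)"
    unfolding has_real_derivative_iff_has_vector_derivative[symmetric]
    by (auto intro!: derivative_eq_intros)
  ultimately show ?thesis
    unfolding dil_def by (rule has_vector_derivative_Pair)
qed

lemma heis_coordinate_decomposition:
  fixes z :: "complex ^ 'n::finite"
  shows "(z, \<tau>) = (\<Sum>a\<in>UNIV. Re (z $ a) *\<^sub>R (axis a 1, 0) + Im (z $ a) *\<^sub>R (axis a \<i>, 0))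
                  + \<tau> *\<^sub>R (0, 1)"
proof -
  have "z = (\<Sum>a\<in>UNIV. Re (z $ a) *\<^sub>R axis a 1 + Im (z $ a) *\<^sub>R axis a \<i>)"
  proof (subst vec_eq_iff, intro allI)
    fix b
    have "(\<Sum>a\<in>UNIV. Re (z $ a) *\<^sub>R axis a (1::complex) + Im (z $ a) *\<^sub>R axis a \<i>) $ b
        = Re (z $ b) *\<^sub>R 1 + Im (z $ b) *\<^sub>R \<i>"
      by (simp add: sum_component axis_def if_distrib cong: if_cong)
    then show "z $ b = (\<Sum>a\<in>UNIV. Re (z $ a) *\<^sub>R axis a 1 + Im (z $ a) *\<^sub>R axis a \<i>) $ b"
      by (simp add: scaleR_conv_of_real complex_eq_iff)
  qed
  then show ?thesis
    by (simp add: sum_prod scaleR_prod_def)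
qed

lemma frechet_derivative_heis_coordinates:
  fixes h :: "'n::finite heis \<Rightarrow> complex"
  assumes "h differentiable (at q)"
  shows "frechet_derivative h (at q) (z, \<tau>)
     = (\<Sum>a\<in>UNIV. Re (z $ a) *\<^sub>R dx a h q + Im (z $ a) *\<^sub>R dy a h q) + \<tau> *\<^sub>R dt h q"
proof -
  let ?L = "frechet_derivative h (at q)"
  have lin: "linear ?L"
    using assms frechet_derivative_works has_derivative_linear by blast
  have "?L (z, \<tau>) = ?L ((\<Sum>a\<in>UNIV. Re (z $ a) *\<^sub>R (axis a 1, 0) + Im (z $ a) *\<^sub>R (axis a \<i>, 0))
                  + \<tau> *\<^sub>R (0, 1))"
    by (subst heis_coordinate_decomposition) (rule refl)
  also have "\<dots> = (\<Sum>a\<in>UNIV. Re (z $ a) *\<^sub>R ?L (axis a 1, 0) + Im (z $ a) *\<^sub>R ?L (axis a \<i>, 0))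
                  + \<tau> *\<^sub>R ?L (0, 1)"
    by (simp only: linear_add[OF lin] linear_cmul[OF lin] linear_sum[OF lin] o_def)
  finally show ?thesis
    unfolding dx_def dy_def dt_def dirD_eq_frechet_derivative[OF assms] .
qed

lemma has_vector_derivative_comp_dil:
  fixes h :: "'n::finite heis \<Rightarrow> complex"
  assumes "h differentiable (at (dil s p))"
  shows "((\<lambda>s. h (dil s p)) has_vector_derivative
     (\<Sum>a\<in>UNIV. Re (fst p $ a) *\<^sub>R dx a h (dil s p) + Im (fst p $ a) *\<^sub>R dy a h (dil s p))
       + (2 * s * snd p) *\<^sub>R dt h (dil s p)) (at s)"
  using has_vector_derivative_frechet_compose[OF has_vector_derivative_dil assms]
  unfolding frechet_derivative_heis_coordinates[OF assms] prod.collapse .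

lemma CR_coordinate_identity:
  fixes z Dx Dy Dt :: complex
  assumes "(Dx + \<i> * Dy) / 2 - \<i> / 2 * (of_real s * z) * Dt = 0"
  shows "Re z *\<^sub>R Dx + Im z *\<^sub>R Dy
       = z * ((Dx - \<i> * Dy) / 2 - \<i> / 2 * cnj (of_real s * z) * Dt)
         + \<i> * of_real s * of_real ((cmod z)\<^sup>2) * Dt"
proof -
  define x y where "x = complex_of_real (Re z)" and "y = complex_of_real (Im z)"
  have z: "z = x + \<i> * y" and cnj_z: "cnj z = x - \<i> * y"
    by (simp_all add: x_def y_def complex_eq_iff)
  have lhs: "Re z *\<^sub>R Dx + Im z *\<^sub>R Dy = x * Dx + y * Dy"
    by (simp add: x_def y_def scaleR_conv_of_real)
  have cnj_sz: "cnj (of_real s * z) = of_real s * cnj z"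
    by simp
  have norm_z: "of_real ((cmod z)\<^sup>2) = z * cnj z"
    by (rule complex_norm_square)
  have "Dx + \<i> * Dy - \<i> * (of_real s * z) * Dt = 0"
    using assms by algebra
  then show ?thesis
    unfolding lhs cnj_sz norm_z using z cnj_z complex_i_mult_minus[of 1] by algebra
qed

lemma has_vector_derivative_comp_dil_CR:
  assumes "open U" and "Cinf_on U h" and "CR_on U h" and q: "dil s p \<in> U"
  shows "((\<lambda>s. h (dil s p)) has_vector_derivative
     (\<Sum>a\<in>UNIV. fst p $ a * heis_Zr a h (dil s p))
       + of_real s * (2 * zcoord None p * heis_Z0 h (dil s p))) (at s)"
proof -
  let ?q = "dil s p"
  have coord: "fst ?q $ a = of_real s * (fst p $ a)" for a
    unfolding dil_def by (simp del: scaleR_conv_of_real) (simp add: scaleR_conv_of_real)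
  have "Re (fst p $ a) *\<^sub>R dx a h ?q + Im (fst p $ a) *\<^sub>R dy a h ?q
      = fst p $ a * heis_Zr a h ?q + \<i> * of_real s * of_real ((cmod (fst p $ a))\<^sup>2) * dt h ?q" for a
  proof -
    have "heis_Zbar a h ?q = 0"
      using assms(3) q unfolding CR_on_def by blast
    then show ?thesis
      using CR_coordinate_identity[of "dx a h ?q" "dy a h ?q" s "fst p $ a" "dt h ?q"]
      unfolding heis_Zbar_def heis_Zr_def coord by simp
  qed
  then have "(\<Sum>a\<in>UNIV. Re (fst p $ a) *\<^sub>R dx a h ?q + Im (fst p $ a) *\<^sub>R dy a h ?q)
        + (2 * s * snd p) *\<^sub>R dt h ?q
      = (\<Sum>a\<in>UNIV. fst p $ a * heis_Zr a h ?q) + of_real s * (2 * zcoord None p * heis_Z0 h ?q)"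
    by (simp add: sum.distrib heis_Z0_def scaleR_conv_of_real algebra_simps
        flip: sum_distrib_left sum_distrib_right)
  then show ?thesis
    using has_vector_derivative_comp_dil[OF Cinf_on_imp_differentiable_at[OF assms(1,2) q]] by simp
qed

(* Polynomial-in-s combinations of pullbacks of smooth functions along s |-> dil s p. The class
   is closed under d/ds on the open set of s with dil s p in U, which is what makes sderiv linear
   there. *)
inductive dil_span :: "'n::finite heis set \<Rightarrow> 'n heis \<Rightarrow> (real \<Rightarrow> complex) \<Rightarrow> bool"
  for U p where
  pullback: "Cinf_on U h \<Longrightarrow> dil_span U p (\<lambda>s. h (dil s p))"
| add: "dil_span U p a \<Longrightarrow> dil_span U p b \<Longrightarrow> dil_span U p (\<lambda>s. a s + b s)"
| cmult: "dil_span U p a \<Longrightarrow> dil_span U p (\<lambda>s. c * a s)"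
| smult: "dil_span U p a \<Longrightarrow> dil_span U p (\<lambda>s. of_real s * a s)"

lemma dil_span_sum:
  assumes "finite A" and "\<And>i. i \<in> A \<Longrightarrow> dil_span U p (f i)"
  shows "dil_span U p (\<lambda>s. \<Sum>i\<in>A. f i s)"
  using assms
proof (induction A rule: finite_induct)
  case empty
  show ?case
    using dil_span.pullback[OF Cinf_on_const[where c = 0]] by simp
qed (auto intro: dil_span.add)

lemma open_dil_preimage: "open U \<Longrightarrow> open {s::real. dil s p \<in> U}"
  using continuous_open_vimage[of U "\<lambda>s. dil s p"] by (simp add: dil_def vimage_def continuous_intros)

lemma dil_span_has_vector_derivative:
  assumes "open U" and "dil_span U p a"
  shows "\<exists>a'. dil_span U p a' \<and> (\<forall>s\<in>{s. dil s p \<in> U}. (a has_vector_derivative a' s) (at s))"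
  using assms(2)
proof induction
  case (pullback h)
  define a' where "a' s = (\<Sum>i\<in>UNIV. of_real (Re (fst p $ i)) * dx i h (dil s p)
      + of_real (Im (fst p $ i)) * dy i h (dil s p)) + of_real s * (of_real (2 * snd p) * dt h (dil s p))"
    for s
  have "dil_span U p a'"
    unfolding a'_def[abs_def] dx_def[abs_def] dy_def[abs_def] dt_def[abs_def]
    by (intro dil_span.intros dil_span_sum Cinf_on_dirD pullback) auto
  moreover have "((\<lambda>s. h (dil s p)) has_vector_derivative a' s) (at s)" if "dil s p \<in> U" for s
    using has_vector_derivative_comp_dil[OF Cinf_on_imp_differentiable_at[OF assms(1) pullback that]]
    by (simp add: a'_def scaleR_conv_of_real ac_simps)
  ultimately show ?case
    by blast
next
  case (add a b)
  then obtain a' b' where "dil_span U p a'" "dil_span U p b'"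
    "\<forall>s\<in>{s. dil s p \<in> U}. (a has_vector_derivative a' s) (at s)"
    "\<forall>s\<in>{s. dil s p \<in> U}. (b has_vector_derivative b' s) (at s)"
    by blast
  then show ?case
    by (intro exI[of _ "\<lambda>s. a' s + b' s"]) (auto intro: dil_span.add has_vector_derivative_add)
next
  case (cmult a c)
  then obtain a' where "dil_span U p a'" "\<forall>s\<in>{s. dil s p \<in> U}. (a has_vector_derivative a' s) (at s)"
    by blast
  then show ?case
    by (intro exI[of _ "\<lambda>s. c * a' s"]) (auto intro: dil_span.cmult has_vector_derivative_mult_right)
next
  case (smult a)
  then obtain a' where a': "dil_span U p a'"
    "\<forall>s\<in>{s. dil s p \<in> U}. (a has_vector_derivative a' s) (at s)"
    by blast
  have "((\<lambda>s. of_real s * a s) has_vector_derivative a s + of_real s * a' s) (at s)"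
    if "s \<in> {s. dil s p \<in> U}" for s
    using has_vector_derivative_mult[OF has_vector_derivative_of_real[OF DERIV_ident] a'(2)[rule_format, OF that]]
    by (simp add: add.commute)
  moreover have "dil_span U p (\<lambda>s. a s + of_real s * a' s)"
    by (intro dil_span.add dil_span.smult smult a')
  ultimately show ?case
    by blast
qed

lemma vector_derivative_cong_open:
  assumes "open T" and "\<And>s. s \<in> T \<Longrightarrow> f s = g s" and "s \<in> T"
  shows "vector_derivative f (at s) = vector_derivative g (at s)"
proof (rule vector_derivative_cong_eq)
  show "\<forall>\<^sub>F x in nhds s. x \<in> UNIV \<longrightarrow> f x = g x"
    using assms unfolding eventually_nhds by blast
qed auto

lemma sderiv_Suc_right: "sderiv (Suc k) g = sderiv k (\<lambda>s. vector_derivative g (at s))"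
  by (induction k) auto

lemma sderiv_cong:
  assumes "open T" and "\<And>s. s \<in> T \<Longrightarrow> a s = b s" and "s \<in> T"
  shows "sderiv k a s = sderiv k b s"
  using assms(3)
proof (induction k arbitrary: s)
  case (Suc k)
  then show ?case
    using vector_derivative_cong_open[OF assms(1) Suc.IH Suc.prems] by simp
qed (use assms(2) in simp)

lemma dil_span_sderiv:
  assumes "open U" and "dil_span U p a"
  shows "\<exists>b. dil_span U p b \<and> (\<forall>s\<in>{s. dil s p \<in> U}. sderiv k a s = b s)"
proof (induction k)
  case 0
  show ?case
    using assms(2) by auto
next
  case (Suc k)
  then obtain b where b: "dil_span U p b" "\<forall>s\<in>{s. dil s p \<in> U}. sderiv k a s = b s"
    by blast
  obtain b' where b': "dil_span U p b'"
    "\<forall>s\<in>{s. dil s p \<in> U}. (b has_vector_derivative b' s) (at s)"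
    using dil_span_has_vector_derivative[OF assms(1) b(1)] by blast
  have "sderiv (Suc k) a s = b' s" if "s \<in> {s. dil s p \<in> U}" for s
    using vector_derivative_cong_open[OF open_dil_preimage[OF assms(1)] _ that, of "sderiv k a" b]
      b(2) b'(2) that vector_derivative_at by fastforce
  then show ?case
    using b'(1) by blast
qed

lemma has_vector_derivative_sderiv:
  assumes "open U" and "dil_span U p a" and "dil s p \<in> U"
  shows "(sderiv k a has_vector_derivative sderiv (Suc k) a s) (at s)"
proof -
  obtain b where b: "dil_span U p b" "\<forall>s\<in>{s. dil s p \<in> U}. sderiv k a s = b s"
    using dil_span_sderiv[OF assms(1,2)] by blast
  obtain b' where b': "\<forall>s\<in>{s. dil s p \<in> U}. (b has_vector_derivative b' s) (at s)"
    using dil_span_has_vector_derivative[OF assms(1) b(1)] by blast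
  have "(b has_vector_derivative b' s) (at s)"
    using b' assms(3) by blast
  then have "(sderiv k a has_vector_derivative b' s) (at s)"
  proof (rule has_vector_derivative_transform_within_open[OF _ open_dil_preimage[OF assms(1)]])
    show "s \<in> {s. dil s p \<in> U}"
      using assms(3) by simp
    show "b y = sderiv k a y" if "y \<in> {s. dil s p \<in> U}" for y
      using b(2) that by simp
  qed
  moreover from this have "sderiv (Suc k) a s = b' s"
    by (simp add: vector_derivative_at)
  ultimately show ?thesis
    by simp
qed

lemma sderiv_zero: "sderiv k (\<lambda>s. 0) = (\<lambda>s. 0)"
  by (induction k) simp_all

lemma sderiv_lincomb:
  assumes "open U" and "dil_span U p a" and "dil_span U p b" and "dil s p \<in> U"
  shows "sderiv k (\<lambda>s. c * a s + d * b s) s = c * sderiv k a s + d * sderiv k b s"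
  using assms(4)
proof (induction k arbitrary: s)
  case (Suc k)
  have "sderiv (Suc k) (\<lambda>s. c * a s + d * b s) s
      = vector_derivative (\<lambda>s. c * sderiv k a s + d * sderiv k b s) (at s)"
    unfolding sderiv.simps
    by (rule vector_derivative_cong_open[OF open_dil_preimage[OF assms(1)]]) (use Suc in auto)
  also have "\<dots> = c * sderiv (Suc k) a s + d * sderiv (Suc k) b s"
    using has_vector_derivative_sderiv[OF assms(1,2) Suc.prems, of k]
      has_vector_derivative_sderiv[OF assms(1,3) Suc.prems, of k]
    by (intro vector_derivative_at has_vector_derivative_add has_vector_derivative_mult_right)
  finally show ?case .
qed simp

lemma sderiv_sum:
  assumes "open U" and "finite A" and "\<And>i. i \<in> A \<Longrightarrow> dil_span U p (f i)" and "dil s p \<in> U"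
  shows "sderiv k (\<lambda>s. \<Sum>i\<in>A. c i * f i s) s = (\<Sum>i\<in>A. c i * sderiv k (f i) s)"
  using assms(2,3)
proof (induction A rule: finite_induct)
  case empty
  show ?case
    by (simp add: sderiv_zero)
next
  case (insert i A)
  have "dil_span U p (\<lambda>s. \<Sum>i\<in>A. c i * f i s)"
    using insert by (intro dil_span_sum dil_span.cmult) auto
  then show ?case
    using insert sderiv_lincomb[OF assms(1) _ _ assms(4), of "f i" "\<lambda>s. \<Sum>i\<in>A. c i * f i s" k "c i" 1]
    by simp
qed

lemma sderiv_smult:
  assumes "open U" and "dil_span U p a" and "dil s p \<in> U"
  shows "sderiv k (\<lambda>s. of_real s * a s) s = of_real s * sderiv k a s + of_nat k * sderiv (k - 1) a s"
  using assms(3)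
proof (induction k arbitrary: s)
  case (Suc k)
  have "sderiv (Suc k) (\<lambda>s. of_real s * a s) s
      = vector_derivative (\<lambda>s. of_real s * sderiv k a s + of_nat k * sderiv (k - 1) a s) (at s)"
    unfolding sderiv.simps
    by (rule vector_derivative_cong_open[OF open_dil_preimage[OF assms(1)]]) (use Suc in auto)
  also have "\<dots> = of_real s * sderiv (Suc k) a s + of_nat (Suc k) * sderiv k a s"
  proof (rule vector_derivative_at)
    have "((\<lambda>s. of_real s * sderiv k a s) has_vector_derivative
        of_real s * sderiv (Suc k) a s + sderiv k a s) (at s)"
      using has_vector_derivative_mult[OF has_vector_derivative_of_real[OF DERIV_ident]
          has_vector_derivative_sderiv[OF assms(1,2) Suc.prems]]
      by (simp add: add.commute)
    moreover have "((\<lambda>s. of_nat k * sderiv (k - 1) a s) has_vector_derivative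
        of_nat k * sderiv k a s) (at s)"
      using has_vector_derivative_mult_right[OF has_vector_derivative_sderiv[OF assms(1,2) Suc.prems]]
      by (cases k) simp_all
    ultimately show "((\<lambda>s. of_real s * sderiv k a s + of_nat k * sderiv (k - 1) a s) has_vector_derivative
        of_real s * sderiv (Suc k) a s + of_nat (Suc k) * sderiv k a s) (at s)"
      by (auto dest: has_vector_derivative_add simp: algebra_simps)
  qed
  finally show ?case
    by simp
qed simp

section \<open>Weighted words\<close>

lemma list_wt_Nil [simp]: "list_wt [] = 0"
  by (simp add: list_wt_def)

lemma list_wt_Cons [simp]: "list_wt (i # I) = idx_wt i + list_wt I"
  by (simp add: list_wt_def)

lemma list_wt_append [simp]: "list_wt (I @ J) = list_wt I + list_wt J"
  by (simp add: list_wt_def)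

lemma idx_wt_ge_1: "1 \<le> idx_wt i"
  by (cases i) simp_all

lemma length_le_list_wt: "length I \<le> list_wt I"
proof (induction I)
  case (Cons i I)
  then show ?case
    using idx_wt_ge_1[of i] by simp
qed simp

lemma list_wt_eq_0_iff: "list_wt I = 0 \<longleftrightarrow> I = []"
  using length_le_list_wt[of I] by auto

lemma finite_list_wt: "finite {I :: 'n::finite option list. list_wt I = m}"
proof (rule finite_subset)
  show "{I :: 'n option list. list_wt I = m} \<subseteq> {I. set I \<subseteq> UNIV \<and> length I \<le> m}"
    using length_le_list_wt by fastforce
  show "finite {I :: 'n option list. set I \<subseteq> UNIV \<and> length I \<le> m}"
    by (rule finite_lists_length_le) simp
qed

lemma list_wt_conv_sum_nth: "list_wt I = (\<Sum>j<length I. idx_wt (I ! j))"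
  unfolding list_wt_def by (simp add: sum_list_sum_nth atLeast0LessThan)

definition remove_nth :: "nat \<Rightarrow> 'a list \<Rightarrow> 'a list" where
  "remove_nth j xs = take j xs @ drop (Suc j) xs"

definition insert_nth :: "nat \<Rightarrow> 'a \<Rightarrow> 'a list \<Rightarrow> 'a list" where
  "insert_nth j x xs = take j xs @ x # drop j xs"

lemma length_remove_nth: "j < length xs \<Longrightarrow> length (remove_nth j xs) = length xs - 1"
  by (simp add: remove_nth_def)

lemma length_insert_nth: "j \<le> length xs \<Longrightarrow> length (insert_nth j x xs) = Suc (length xs)"
  by (simp add: insert_nth_def)

lemma insert_nth_remove_nth: "j < length xs \<Longrightarrow> insert_nth j (xs ! j) (remove_nth j xs) = xs"
  by (simp add: insert_nth_def remove_nth_def min_def id_take_nth_drop[symmetric])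

lemma remove_nth_insert_nth: "j \<le> length xs \<Longrightarrow> remove_nth j (insert_nth j x xs) = xs"
  by (simp add: insert_nth_def remove_nth_def min_def)

lemma nth_insert_nth: "j \<le> length xs \<Longrightarrow> insert_nth j x xs ! j = x"
  by (simp add: insert_nth_def nth_append min_def)

lemma list_wt_insert_nth: "j \<le> length I \<Longrightarrow> list_wt (insert_nth j i I) = idx_wt i + list_wt I"
  unfolding insert_nth_def by (metis append_take_drop_id list_wt_Cons list_wt_append add.left_commute)

lemma list_wt_remove_nth: "j < length I \<Longrightarrow> list_wt I = idx_wt (I ! j) + list_wt (remove_nth j I)"
  using list_wt_insert_nth[of j "remove_nth j I" "I ! j"] insert_nth_remove_nth[of j I]
    length_remove_nth[of j I] by simp

lemma sum_marked_letter:
  fixes G :: "'n::finite option \<Rightarrow> 'n option list \<Rightarrow> 'a::comm_monoid_add"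
  shows "(\<Sum>I\<in>{I. list_wt I = m}. \<Sum>j<length I. G (I ! j) (remove_nth j I))
       = (\<Sum>i\<in>{i. idx_wt i \<le> m}. \<Sum>J\<in>{J. list_wt J = m - idx_wt i}. \<Sum>j\<le>length J. G i J)"
proof -
  have "(\<Sum>I\<in>{I. list_wt I = m}. \<Sum>j<length I. G (I ! j) (remove_nth j I))
      = (\<Sum>(I, j)\<in>(SIGMA I:{I. list_wt I = m}. {..<length I}). G (I ! j) (remove_nth j I))"
    by (rule sum.Sigma) (auto simp: finite_list_wt)
  also have "\<dots> = (\<Sum>(i, J, j)\<in>(SIGMA i:{i. idx_wt i \<le> m}. SIGMA J:{J. list_wt J = m - idx_wt i}.
      {..length J}). G i J)"
  proof (rule sum.reindex_bij_witness[where i = "\<lambda>(i, J, j). (insert_nth j i J, j)"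
        and j = "\<lambda>(I, j). (I ! j, remove_nth j I, j)"])
  qed (auto simp: insert_nth_remove_nth remove_nth_insert_nth nth_insert_nth length_remove_nth
      length_insert_nth list_wt_insert_nth dest: list_wt_remove_nth)
  also have "\<dots> = (\<Sum>i\<in>{i. idx_wt i \<le> m}. \<Sum>J\<in>{J. list_wt J = m - idx_wt i}. \<Sum>j\<le>length J. G i J)"
    by (subst sum.Sigma[symmetric]; (subst sum.Sigma[symmetric])?) (auto simp: finite_list_wt)
  finally show ?thesis .
qed

lemma of_nat_Suc_times_divide_fact_Suc:
  "of_nat (Suc n) * (x / of_nat (fact (Suc n))) = x / (of_nat (fact n) :: 'a::field_char_0)"
proof -
  have "of_nat (fact (Suc n)) = (of_nat (Suc n) :: 'a) * of_nat (fact n)"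
    by (simp only: fact_Suc of_nat_mult of_nat_id)
  then show ?thesis
    by (simp only:) (simp add: field_simps del: of_nat_Suc)
qed

lemma list_wt_times_symmetric:
  fixes W :: "'n option list \<Rightarrow> complex"
  assumes W_sym: "\<And>i J j. j \<le> length J \<Longrightarrow> W (insert_nth j i J) = W (i # J)"
  shows "of_nat (list_wt I) * (W I / of_nat (fact (length I)))
    = (\<Sum>j<length I. of_nat (idx_wt (I ! j)) * W (I ! j # remove_nth j I)
                        / of_nat (fact (Suc (length (remove_nth j I)))))"
proof -
  have "of_nat (list_wt I) * (W I / of_nat (fact (length I)))
      = (\<Sum>j<length I. of_nat (idx_wt (I ! j)) * W I / of_nat (fact (length I)))"
    by (simp add: list_wt_conv_sum_nth sum_distrib_right sum_divide_distrib)
  also have "\<dots> = (\<Sum>j<length I. of_nat (idx_wt (I ! j)) * W (I ! j # remove_nth j I)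
                        / of_nat (fact (Suc (length (remove_nth j I)))))"
  proof (rule sum.cong[OF refl])
    fix j assume "j \<in> {..<length I}"
    then have j: "j < length I"
      by simp
    then have "W I = W (I ! j # remove_nth j I)" and "Suc (length (remove_nth j I)) = length I"
      using W_sym[of j "remove_nth j I" "I ! j"] insert_nth_remove_nth[OF j] length_remove_nth[OF j]
      by simp_all
    then show "of_nat (idx_wt (I ! j)) * W I / of_nat (fact (length I))
        = of_nat (idx_wt (I ! j)) * W (I ! j # remove_nth j I) / of_nat (fact (Suc (length (remove_nth j I))))"
      by simp
  qed
  finally show ?thesis .
qed

(* Every word is counted once for each of its letters, weighted by the letter's weight; the symmetry
   of W moves the counted letter to the front. *)
lemma weighted_word_sum:
  fixes W :: "'n::finite option list \<Rightarrow> complex"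
  assumes W_sym: "\<And>i J j. j \<le> length J \<Longrightarrow> W (insert_nth j i J) = W (i # J)"
  shows "of_nat m * (\<Sum>I\<in>{I. list_wt I = m}. W I / of_nat (fact (length I)))
    = (\<Sum>i\<in>{i. idx_wt i \<le> m}. of_nat (idx_wt i) *
          (\<Sum>J\<in>{J. list_wt J = m - idx_wt i}. W (i # J) / of_nat (fact (length J))))"
proof -
  define G where "G i J = of_nat (idx_wt i) * W (i # J) / of_nat (fact (Suc (length J)))" for i J
  have "of_nat m * (\<Sum>I\<in>{I. list_wt I = m}. W I / of_nat (fact (length I)))
      = (\<Sum>I\<in>{I. list_wt I = m}. \<Sum>j<length I. G (I ! j) (remove_nth j I))"
    unfolding sum_distrib_left
  proof (rule sum.cong[OF refl])
    fix I :: "'n option list"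
    assume "I \<in> {I. list_wt I = m}"
    then show "of_nat m * (W I / of_nat (fact (length I))) = (\<Sum>j<length I. G (I ! j) (remove_nth j I))"
      using list_wt_times_symmetric[OF W_sym, of I] by (simp add: G_def)
  qed
  also have "\<dots> = (\<Sum>i\<in>{i. idx_wt i \<le> m}. \<Sum>J\<in>{J. list_wt J = m - idx_wt i}. of_nat (Suc (length J)) * G i J)"
    unfolding sum_marked_letter by simp
  also have "\<dots> = (\<Sum>i\<in>{i. idx_wt i \<le> m}. of_nat (idx_wt i) *
          (\<Sum>J\<in>{J. list_wt J = m - idx_wt i}. W (i # J) / of_nat (fact (length J))))"
    using of_nat_Suc_times_divide_fact_Suc[where 'a = complex]
    by (simp add: G_def sum_distrib_left mult.assoc del: of_nat_Suc)
  finally show ?thesis .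
qed

lemma sum_idx_wt_le_Suc:
  fixes G :: "'n::finite option \<Rightarrow> 'a::comm_monoid_add"
  shows "(\<Sum>i\<in>{i. idx_wt i \<le> Suc n}. G i) = (\<Sum>a\<in>UNIV. G (Some a)) + (if 1 \<le> n then G None else 0)"
proof -
  have "{i :: 'n option. idx_wt i \<le> Suc n} = (if 1 \<le> n then insert None (range Some) else range Some)"
  proof (rule set_eqI)
    fix i :: "'n option"
    show "i \<in> {i. idx_wt i \<le> Suc n} \<longleftrightarrow> i \<in> (if 1 \<le> n then insert None (range Some) else range Some)"
      by (cases i) auto
  qed
  then show ?thesis
    by (simp add: sum.reindex add.commute)
qed

section \<open>Taylor coefficients of CR functions\<close>

definition CR_taylor_part :: "nat \<Rightarrow> ('n::finite heis \<Rightarrow> complex) \<Rightarrow> 'n heis \<Rightarrow> complex" where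
  "CR_taylor_part m h p = (\<Sum>I\<in>{I. list_wt I = m}. zI I p * ZI I h 0 / of_nat (fact (length I)))"

lemma CR_taylor_part_0: "CR_taylor_part 0 h p = h 0"
  by (simp add: CR_taylor_part_def list_wt_eq_0_iff zI_def)

lemma CR_taylor_part_Suc:
  assumes "open U" and "0 \<in> U" and "Cinf_on U h"
  shows "of_nat (Suc n) * CR_taylor_part (Suc n) h p
    = (\<Sum>a\<in>UNIV. fst p $ a * CR_taylor_part n (heis_Zr a h) p)
      + (if 1 \<le> n then 2 * zcoord None p * CR_taylor_part (n - 1) (heis_Z0 h) p else 0)"
proof -
  define W where "W I = zI I p * ZI I h 0" for I
  have "W (insert_nth j i J) = W (i # J)" for i J j
  proof -
    have "ZI (take j J @ i # drop j J) h 0 = ZI (i # take j J @ drop j J) h 0"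
      by (rule ZI_move_to_front[OF assms(1,3,2)])
    moreover have "zI (take j J @ i # drop j J) p = zI (i # take j J @ drop j J) p"
      by (rule zI_move_to_front)
    ultimately show ?thesis
      by (simp add: W_def insert_nth_def)
  qed
  note sum = weighted_word_sum[of W, OF this, of "Suc n"]
  have Zr: "W (Some a # J) = fst p $ a * (zI J p * ZI J (heis_Zr a h) 0)" for a J
    by (simp add: W_def zI_def ZI_heis_Zr_at_0[OF assms])
  have Z0: "W (None # J) = zcoord None p * (zI J p * ZI J (heis_Z0 h) 0)" for J
    by (simp add: W_def zI_def ZI_heis_Z0_at_0[OF assms] del: zcoord.simps)
  show ?thesis
    using sum unfolding CR_taylor_part_def W_def[symmetric] sum_idx_wt_le_Suc
    by (simp add: Zr Z0 sum_distrib_left mult.assoc times_divide_eq_right del: zcoord.simps)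
qed

lemma sderiv_Suc_comp_dil_CR:
  assumes U: "open U" "0 \<in> U" and h: "Cinf_on U h" "CR_on U h"
  shows "sderiv (Suc n) (\<lambda>s. h (dil s p)) 0
    = (\<Sum>a\<in>UNIV. fst p $ a * sderiv n (\<lambda>s. heis_Zr a h (dil s p)) 0)
      + of_nat n * (2 * zcoord None p * sderiv (n - 1) (\<lambda>s. heis_Z0 h (dil s p)) 0)"
proof -
  define z0 where "z0 = zcoord None p"
  have dil0: "dil 0 p \<in> U"
    using U(2) by (simp add: dil_def zero_prod_def)
  have Zr: "dil_span U p (\<lambda>s. heis_Zr a h (dil s p))" for a
    using U(1) h(1) by (intro dil_span.pullback Cinf_on_heis_Zr)
  have Z0: "dil_span U p (\<lambda>s. heis_Z0 h (dil s p))"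
    using dil_span.pullback[OF Cinf_on_Zidx[OF U(1) h(1), of None]] by simp
  have Zr_sum: "dil_span U p (\<lambda>s. \<Sum>a\<in>UNIV. fst p $ a * heis_Zr a h (dil s p))"
    by (intro dil_span_sum dil_span.cmult Zr) simp
  have Z0_smult: "dil_span U p (\<lambda>s. of_real s * (2 * z0 * heis_Z0 h (dil s p)))"
    by (intro dil_span.smult dil_span.cmult Z0)
  have "sderiv (Suc n) (\<lambda>s. h (dil s p)) 0 = sderiv n (\<lambda>s. (\<Sum>a\<in>UNIV. fst p $ a * heis_Zr a h (dil s p))
      + of_real s * (2 * z0 * heis_Z0 h (dil s p))) 0"
    unfolding sderiv_Suc_right z0_def
  proof (rule sderiv_cong[OF open_dil_preimage[OF U(1), of p]])
    show "vector_derivative (\<lambda>s. h (dil s p)) (at s) = (\<Sum>a\<in>UNIV. fst p $ a * heis_Zr a h (dil s p))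
        + of_real s * (2 * zcoord None p * heis_Z0 h (dil s p))" if "s \<in> {s. dil s p \<in> U}" for s
      using that by (intro vector_derivative_at has_vector_derivative_comp_dil_CR[OF U(1) h]) simp
  qed (use dil0 in simp)
  also have "\<dots> = sderiv n (\<lambda>s. \<Sum>a\<in>UNIV. fst p $ a * heis_Zr a h (dil s p)) 0
      + sderiv n (\<lambda>s. of_real s * (2 * z0 * heis_Z0 h (dil s p))) 0"
    using sderiv_lincomb[OF U(1) Zr_sum Z0_smult dil0, of n 1 1] by simp
  also have "sderiv n (\<lambda>s. \<Sum>a\<in>UNIV. fst p $ a * heis_Zr a h (dil s p)) 0
      = (\<Sum>a\<in>UNIV. fst p $ a * sderiv n (\<lambda>s. heis_Zr a h (dil s p)) 0)"
    using sderiv_sum[OF U(1) finite_class.finite_UNIV Zr dil0] .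
  also have "sderiv n (\<lambda>s. of_real s * (2 * z0 * heis_Z0 h (dil s p))) 0
      = of_nat n * (2 * z0 * sderiv (n - 1) (\<lambda>s. heis_Z0 h (dil s p)) 0)"
    using sderiv_smult[OF U(1) dil_span.cmult[OF Z0] dil0, of n]
      sderiv_lincomb[OF U(1) Z0 Z0 dil0, of "n - 1" "2 * z0" 0] by simp
  finally show ?thesis
    unfolding z0_def .
qed

lemma sderiv_comp_dil_CR:
  assumes U: "open U" "0 \<in> U" and "Cinf_on U h" and "CR_on U h"
  shows "sderiv m (\<lambda>s. h (dil s p)) 0 = of_nat (fact m) * CR_taylor_part m h p"
  using assms(3,4)
proof (induction m arbitrary: h rule: less_induct)
  case (less m)
  show ?case
  proof (cases m)
    case 0
    then show ?thesis
      by (simp add: CR_taylor_part_0 dil_def zero_prod_def)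
  next
    case (Suc n)
    have Z0: "Cinf_on U (heis_Z0 h)"
      using Cinf_on_Zidx[OF U(1) less.prems(1), of None] by simp
    have IH_Zr: "sderiv n (\<lambda>s. heis_Zr a h (dil s p)) 0
        = of_nat (fact n) * CR_taylor_part n (heis_Zr a h) p" for a
      using less.IH[of n] Suc Cinf_on_heis_Zr[OF U(1) less.prems(1)] CR_on_heis_Zr[OF U(1) less.prems]
      by simp
    have IH_Z0: "of_nat n * sderiv (n - 1) (\<lambda>s. heis_Z0 h (dil s p)) 0
        = of_nat (fact n) * (if 1 \<le> n then CR_taylor_part (n - 1) (heis_Z0 h) p else 0)"
    proof (cases n)
      case (Suc k)
      then show ?thesis
        using less.IH[of k] \<open>m = Suc n\<close> Z0 CR_on_heis_Z0[OF U(1) less.prems]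
        by (simp add: algebra_simps)
    qed simp
    have "sderiv m (\<lambda>s. h (dil s p)) 0
        = of_nat (fact n) * ((\<Sum>a\<in>UNIV. fst p $ a * CR_taylor_part n (heis_Zr a h) p)
          + (if 1 \<le> n then 2 * zcoord None p * CR_taylor_part (n - 1) (heis_Z0 h) p else 0))"
      unfolding Suc sderiv_Suc_comp_dil_CR[OF U less.prems] IH_Zr
      using IH_Z0 by (simp add: sum_distrib_left algebra_simps del: zcoord.simps)
    also have "\<dots> = of_nat (fact m) * CR_taylor_part m h p"
      unfolding CR_taylor_part_Suc[OF U less.prems(1), symmetric] Suc by (simp add: algebra_simps)
    finally show ?thesis .
  qed
qed

theorem mainTheorem3:
  fixes f :: "'n::finite heis \<Rightarrow> complex" and U :: "'n heis set" and m :: nat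
  assumes "open U" and "0 \<in> U" and "Cinf_on U f"
    and "\<forall>a. \<forall>p\<in>U. heis_Zbar a f p = 0"
  shows "weight_part m f =
    (\<lambda>p. \<Sum>I\<in>{I :: 'n option list. list_wt I = m}.
            zI I p * ZI I f 0 / of_nat (fact (length I)))"
proof -
  have "CR_on U f"
    using assms(4) by (simp add: CR_on_def)
  then have "sderiv m (\<lambda>s. f (dil s p)) 0 = of_nat (fact m) * CR_taylor_part m f p" for p
    using sderiv_comp_dil_CR[OF assms(1-3)] by blast
  then show ?thesis
    by (simp add: weight_part_def CR_taylor_part_def fun_eq_iff)
qed

end
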